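(* Let $V$ be a vector space over a field $\mathbb K$ and $Mag(V)$ the free unital magmatic algebra on $V$. There is a unique linear map $\Delta:Mag(V)\to Mag(V)\otimes Mag(V)$ such that $\Delta(1)=1\otimes1$, $\Delta(v)=v\otimes1+1\otimes v$ for all $v\in V$, and $\Delta(x\cdot y)=\Delta(x)\cdot(1\otimes y)+(x\otimes1)\cdot\Delta(y)-x\otimes y$ for all $x,y\in Mag(V)$; this $\Delta$ is coassociative, and with it (and the counit given by projection onto $\mathbb K1$) $Mag(V)$ is an $As^c$-$Mag$-bialgebra.
   Context: $Mag(V)=\bigoplus_{n\ge0}\mathbb K[Y_{n-1}]\otimes V^{\otimes n}$, where $Y_{n-1}$ is the set of planar binary rooted trees with $n$ leaves and the $n=0$ summand is $\mathbb K1$; the product is $(t;v_1\dots v_p)\cdot(s;v_{p+1}\dots v_{p+q})=(t\vee s;v_1\dots v_{p+q})$, $t\vee s$ being the grafting of $t$ and $s$ on a new root, with unit $1$; $V$ is identified with the summand for the one-leaf tree. The product on $Mag(V)\otimes Mag(V)$ is $(x\otimes y)\cdot(x'\otimes y')=(x\cdot x')\otimes(y\cdot y')$. An $As^c$-$Mag$-bialgebra is a vector space with a unital (not necessarily associative) product $\cdot$ and a coassociative counital coproduct $\Delta$ with $\Delta(1)=1\otimes1$ satisfying the displayed compatibility relation. *)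

theory Defs
  imports "HOL-Library.Poly_Mapping"
begin

(* A vector space V over a field 'k is represented through a basis
  indexed by the type 'b, i.e. V = ('b \<Rightarrow>\<^sub>0 'k) sits inside Mag(V) as the span of the
  one-leaf trees. Mag(V) = \<Oplus>_n K[Y_{n-1}] \<otimes> V^{\<otimes>n} then has as basis the planar binary
  rooted trees with leaves labelled by basis elements, together with the unit 1
  (encoded as None). Tensor products of free modules are free on the product of bases. *)

datatype 'b ltree = Leaf 'b | Node "'b ltree" "'b ltree"

type_synonym 'b mbasis = "'b ltree option"

type_synonym ('b, 'k) mag = "'b mbasis \<Rightarrow>\<^sub>0 'k"
type_synonym ('b, 'k) mag2 = "('b mbasis \<times> 'b mbasis) \<Rightarrow>\<^sub>0 'k"
type_synonym ('b, 'k) mag3 = "('b mbasis \<times> 'b mbasis \<times> 'b mbasis) \<Rightarrow>\<^sub>0 'k"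

fun bmul :: "'b mbasis \<Rightarrow> 'b mbasis \<Rightarrow> 'b mbasis" where
  "bmul None y = y"
| "bmul x None = x"
| "bmul (Some t) (Some s) = Some (Node t s)"

definition scal :: "'k::field \<Rightarrow> ('a \<Rightarrow>\<^sub>0 'k) \<Rightarrow> ('a \<Rightarrow>\<^sub>0 'k)" where
  "scal c x = Poly_Mapping.map (\<lambda>a. c * a) x"

definition mag_mult :: "('b, 'k::field) mag \<Rightarrow> ('b, 'k) mag \<Rightarrow> ('b, 'k) mag" where
  "mag_mult x y = (\<Sum>a\<in>Poly_Mapping.keys x. \<Sum>b\<in>Poly_Mapping.keys y.
      Poly_Mapping.single (bmul a b) (Poly_Mapping.lookup x a * Poly_Mapping.lookup y b))"

definition mag_one :: "('b, 'k::field) mag" where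
  "mag_one = Poly_Mapping.single None 1"

definition inV :: "('b, 'k::field) mag \<Rightarrow> bool" where
  "inV v \<longleftrightarrow> Poly_Mapping.keys v \<subseteq> Some ` Leaf ` UNIV"

definition tens :: "('b, 'k::field) mag \<Rightarrow> ('b, 'k) mag \<Rightarrow> ('b, 'k) mag2" where
  "tens x y = (\<Sum>a\<in>Poly_Mapping.keys x. \<Sum>b\<in>Poly_Mapping.keys y.
      Poly_Mapping.single (a, b) (Poly_Mapping.lookup x a * Poly_Mapping.lookup y b))"

definition mag2_mult :: "('b, 'k::field) mag2 \<Rightarrow> ('b, 'k) mag2 \<Rightarrow> ('b, 'k) mag2" where
  "mag2_mult S T = (\<Sum>p\<in>Poly_Mapping.keys S. \<Sum>q\<in>Poly_Mapping.keys T.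
      Poly_Mapping.single (bmul (fst p) (fst q), bmul (snd p) (snd q))
        (Poly_Mapping.lookup S p * Poly_Mapping.lookup T q))"

definition is_linear :: "(('a \<Rightarrow>\<^sub>0 'k::field) \<Rightarrow> ('c \<Rightarrow>\<^sub>0 'k)) \<Rightarrow> bool" where
  "is_linear f \<longleftrightarrow> (\<forall>x y. f (x + y) = f x + f y) \<and> (\<forall>c x. f (scal c x) = scal c (f x))"

(* (\<Delta> \<otimes> id) and (id \<otimes> \<Delta>) applied to an element of Mag(V)\<otimes>Mag(V), both
  landing in Mag(V)^{\<otimes>3} (identified via the canonical associativity isomorphism). *)
definition tens_left :: "(('b, 'k::field) mag \<Rightarrow> ('b, 'k) mag2) \<Rightarrow> ('b, 'k) mag2 \<Rightarrow> ('b, 'k) mag3" where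
  "tens_left D T = (\<Sum>p\<in>Poly_Mapping.keys T. \<Sum>q\<in>Poly_Mapping.keys (D (Poly_Mapping.single (fst p) 1)).
      Poly_Mapping.single (fst q, snd q, snd p)
        (Poly_Mapping.lookup T p * Poly_Mapping.lookup (D (Poly_Mapping.single (fst p) 1)) q))"

definition tens_right :: "(('b, 'k::field) mag \<Rightarrow> ('b, 'k) mag2) \<Rightarrow> ('b, 'k) mag2 \<Rightarrow> ('b, 'k) mag3" where
  "tens_right D T = (\<Sum>p\<in>Poly_Mapping.keys T. \<Sum>q\<in>Poly_Mapping.keys (D (Poly_Mapping.single (snd p) 1)).
      Poly_Mapping.single (fst p, fst q, snd q)
        (Poly_Mapping.lookup T p * Poly_Mapping.lookup (D (Poly_Mapping.single (snd p) 1)) q))"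

definition counit :: "('b, 'k::field) mag \<Rightarrow> 'k" where
  "counit x = Poly_Mapping.lookup x None"

definition counit_left :: "('b, 'k::field) mag2 \<Rightarrow> ('b, 'k) mag" where
  "counit_left T = (\<Sum>p\<in>Poly_Mapping.keys T.
      scal (counit (Poly_Mapping.single (fst p) 1) * Poly_Mapping.lookup T p) (Poly_Mapping.single (snd p) 1))"

definition counit_right :: "('b, 'k::field) mag2 \<Rightarrow> ('b, 'k) mag" where
  "counit_right T = (\<Sum>p\<in>Poly_Mapping.keys T.
      scal (counit (Poly_Mapping.single (snd p) 1) * Poly_Mapping.lookup T p) (Poly_Mapping.single (fst p) 1))"

definition mag_coprod_spec :: "(('b, 'k::field) mag \<Rightarrow> ('b, 'k) mag2) \<Rightarrow> bool" where
  "mag_coprod_spec D \<longleftrightarrow>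
     is_linear D \<and>
     D mag_one = tens mag_one mag_one \<and>
     (\<forall>v. inV v \<longrightarrow> D v = tens v mag_one + tens mag_one v) \<and>
     (\<forall>x y. D (mag_mult x y) =
        mag2_mult (D x) (tens mag_one y) + mag2_mult (tens x mag_one) (D y) - tens x y)"

definition asc_mag_bialgebra :: "(('b, 'k::field) mag \<Rightarrow> ('b, 'k) mag2) \<Rightarrow> bool" where
  "asc_mag_bialgebra D \<longleftrightarrow>
     (\<forall>x :: ('b, 'k) mag. mag_mult mag_one x = x \<and> mag_mult x mag_one = x) \<and>
     is_linear D \<and>
     (\<forall>x. tens_left D (D x) = tens_right D (D x)) \<and>
     (\<forall>x y :: ('b, 'k) mag. counit (x + y) = counit x + counit y) \<and>
     (\<forall>c (x :: ('b, 'k) mag). counit (scal c x) = c * counit x) \<and>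
     (\<forall>x. counit_left (D x) = x \<and> counit_right (D x) = x) \<and>
     D mag_one = tens mag_one mag_one \<and>
     (\<forall>x y. D (mag_mult x y) =
        mag2_mult (D x) (tens mag_one y) + mag2_mult (tens x mag_one) (D y) - tens x y)"

end

theory Submission
  imports Defs
begin

(* On basis elements the conditions leave no choice: 1 and the leaves are prescribed, and
  the compatibility relation for a grafting t \<or> s expresses \<Delta>(t \<or> s) through \<Delta>(t) and \<Delta>(s).
  This recursion on trees defines \<Delta> on the basis; both sides of the compatibility relation
  are bilinear, so its linear extension satisfies the relation everywhere, and any linear
  solution agrees with it on the basis.
  Coassociativity is proved by induction on trees. Applying \<Delta> \<otimes> id and id \<otimes> \<Delta> to the
  recursion for \<Delta>(t \<or> s) and using the induction hypotheses, both sides consist of the same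
  terms except for one cross term each, \<Sum> t' \<otimes> t'' s' \<otimes> s'' over \<Delta>(t) = \<Sum> t' \<otimes> t'' and
  \<Delta>(s) = \<Sum> s' \<otimes> s'', which are equal by exchanging the two sums.
  For the counit, \<epsilon> \<otimes> id kills every term of \<Delta>(t \<or> s) except those of \<Delta>(t)(1 \<otimes> s). *)

lemma lookup_scal [simp]: "Poly_Mapping.lookup (scal c x) a = c * Poly_Mapping.lookup x a"
  by (simp add: scal_def map.rep_eq when_def)

lemma scal_add_right: "scal c (x + y) = scal c x + scal c y"
  by (rule poly_mapping_eqI) (simp add: lookup_add algebra_simps)

lemma scal_add_left: "scal (c + d) x = scal c x + scal d x"
  by (rule poly_mapping_eqI) (simp add: lookup_add algebra_simps)

lemma scal_diff_right: "scal c (x - y) = scal c x - scal c y"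
  by (rule poly_mapping_eqI) (simp add: lookup_minus algebra_simps)

lemma scal_zero_right [simp]: "scal c 0 = 0"
  by (rule poly_mapping_eqI) simp

lemma scal_zero_left [simp]: "scal 0 x = 0"
  by (rule poly_mapping_eqI) simp

lemma scal_one [simp]: "scal 1 x = x"
  by (rule poly_mapping_eqI) simp

lemma scal_scal: "scal c (scal d x) = scal (c * d) x"
  by (rule poly_mapping_eqI) simp

lemma scal_single: "scal c (Poly_Mapping.single a d) = Poly_Mapping.single a (c * d)"
  by (rule poly_mapping_eqI) (simp add: lookup_single when_def)

lemma scal_sum: "scal c (sum f A) = (\<Sum>a\<in>A. scal c (f a))"
  by (induction A rule: infinite_finite_induct) (simp_all add: scal_add_right)

definition lin_ext :: "('a \<Rightarrow> ('c \<Rightarrow>\<^sub>0 'k::field)) \<Rightarrow> ('a \<Rightarrow>\<^sub>0 'k) \<Rightarrow> ('c \<Rightarrow>\<^sub>0 'k)" where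
  "lin_ext f x = (\<Sum>a\<in>Poly_Mapping.keys x. scal (Poly_Mapping.lookup x a) (f a))"

lemma lin_ext_superset:
  assumes "finite S" "Poly_Mapping.keys x \<subseteq> S"
  shows "lin_ext f x = (\<Sum>a\<in>S. scal (Poly_Mapping.lookup x a) (f a))"
  unfolding lin_ext_def
  by (rule sum.mono_neutral_left) (use assms in \<open>auto simp: in_keys_iff\<close>)

lemma lin_ext_add [simp]: "lin_ext f (x + y) = lin_ext f x + lin_ext f y"
proof -
  let ?S = "Poly_Mapping.keys x \<union> Poly_Mapping.keys y \<union> Poly_Mapping.keys (x + y)"
  have "lin_ext f (x + y) = (\<Sum>a\<in>?S. scal (Poly_Mapping.lookup (x + y) a) (f a))"
    by (rule lin_ext_superset) auto
  also have "\<dots> = (\<Sum>a\<in>?S. scal (Poly_Mapping.lookup x a) (f a))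
      + (\<Sum>a\<in>?S. scal (Poly_Mapping.lookup y a) (f a))"
    by (simp add: lookup_add scal_add_left sum.distrib)
  also have "\<dots> = lin_ext f x + lin_ext f y"
    by (subst (1 2) lin_ext_superset[where S = ?S]) auto
  finally show ?thesis .
qed

lemma lin_ext_zero [simp]: "lin_ext f 0 = 0"
  by (simp add: lin_ext_def)

lemma lin_ext_uminus [simp]: "lin_ext f (- x) = - lin_ext f x"
  using lin_ext_add[of f x "- x"] by (simp add: minus_unique)

lemma lin_ext_diff [simp]: "lin_ext f (x - y) = lin_ext f x - lin_ext f y"
  using lin_ext_add[of f x "- y"] by simp

lemma lin_ext_scal [simp]: "lin_ext f (scal c x) = scal c (lin_ext f x)"
proof -
  have "lin_ext f (scal c x)
      = (\<Sum>a\<in>Poly_Mapping.keys x. scal (Poly_Mapping.lookup (scal c x) a) (f a))"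
    by (rule lin_ext_superset) (auto simp: in_keys_iff)
  then show ?thesis by (simp add: lin_ext_def scal_sum scal_scal)
qed

lemma lin_ext_single [simp]: "lin_ext f (Poly_Mapping.single a c) = scal c (f a)"
  by (subst lin_ext_superset[where S = "{a}"]) auto

lemma lin_ext_sum: "lin_ext f (sum g A) = (\<Sum>i\<in>A. lin_ext f (g i))"
  by (induction A rule: infinite_finite_induct) simp_all

lemma lin_ext_fun_add [simp]: "lin_ext (\<lambda>a. f a + g a) x = lin_ext f x + lin_ext g x"
  by (simp add: lin_ext_def scal_add_right sum.distrib)

lemma lin_ext_fun_zero [simp]: "lin_ext (\<lambda>a. 0) x = 0"
  by (simp add: lin_ext_def)

lemma lin_ext_fun_uminus [simp]: "lin_ext (\<lambda>a. - f a) x = - lin_ext f x"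
  using lin_ext_fun_add[of f "\<lambda>a. - f a" x] by (simp add: minus_unique)

lemma lin_ext_fun_diff [simp]: "lin_ext (\<lambda>a. f a - g a) x = lin_ext f x - lin_ext g x"
  using lin_ext_fun_add[of f "\<lambda>a. - g a" x] by simp

lemma lin_ext_fun_scal [simp]: "lin_ext (\<lambda>a. scal c (f a)) x = scal c (lin_ext f x)"
  by (simp add: lin_ext_def scal_sum scal_scal mult.commute)

lemma lin_ext_lin_ext [simp]: "lin_ext f (lin_ext g x) = lin_ext (\<lambda>a. lin_ext f (g a)) x"
  by (simp add: lin_ext_def[of g] lin_ext_sum) (simp add: lin_ext_def)

lemma lin_ext_single_one [simp]: "lin_ext (\<lambda>a. Poly_Mapping.single a 1) x = x"
  by (rule poly_mapping_eqI)
    (simp add: lin_ext_def lookup_sum scal_single lookup_single when_def in_keys_iff)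

lemma lin_ext_cong:
  "(\<And>a. a \<in> Poly_Mapping.keys x \<Longrightarrow> f a = g a) \<Longrightarrow> lin_ext f x = lin_ext g x"
  by (simp add: lin_ext_def)

lemma lin_ext_swap:
  "lin_ext (\<lambda>p. lin_ext (\<lambda>q. f p q) y) x = lin_ext (\<lambda>q. lin_ext (\<lambda>p. f p q) x) y"
  by (simp add: lin_ext_def scal_sum scal_scal sum.swap[of _ "Poly_Mapping.keys x"] mult.commute)

lemma is_linear_lin_ext: "is_linear (lin_ext f)"
  by (simp add: is_linear_def)

lemma is_linear_sum:
  assumes "is_linear F"
  shows "F (sum g A) = (\<Sum>i\<in>A. F (g i))"
proof -
  have "F 0 = 0"
    using assms add_cancel_right_right unfolding is_linear_def by metis
  then show ?thesis
    using assms by (induction A rule: infinite_finite_induct) (simp_all add: is_linear_def)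
qed

lemma is_linear_eq_lin_ext:
  assumes "is_linear F"
  shows "F x = lin_ext (\<lambda>a. F (Poly_Mapping.single a 1)) x"
proof -
  have "F x = F (lin_ext (\<lambda>a. Poly_Mapping.single a 1) x)"
    by simp
  also have "\<dots> = (\<Sum>a\<in>Poly_Mapping.keys x.
      F (scal (Poly_Mapping.lookup x a) (Poly_Mapping.single a 1)))"
    unfolding lin_ext_def by (rule is_linear_sum[OF assms])
  also have "\<dots> = lin_ext (\<lambda>a. F (Poly_Mapping.single a 1)) x"
    using assms by (simp add: lin_ext_def is_linear_def)
  finally show ?thesis .
qed

lemma bilinear_eq_on_basis:
  assumes "\<And>y. is_linear (\<lambda>x. F x y)" "\<And>x. is_linear (F x)"
    and "\<And>y. is_linear (\<lambda>x. G x y)" "\<And>x. is_linear (G x)"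
    and "\<And>a b. F (Poly_Mapping.single a 1) (Poly_Mapping.single b 1)
               = G (Poly_Mapping.single a 1) (Poly_Mapping.single b 1)"
  shows "F x y = G x y"
proof -
  have "F x y = lin_ext (\<lambda>a. F (Poly_Mapping.single a 1) y) x"
    by (rule is_linear_eq_lin_ext[OF assms(1)])
  also have "\<dots> = lin_ext (\<lambda>a. lin_ext (\<lambda>b. F (Poly_Mapping.single a 1) (Poly_Mapping.single b 1)) y) x"
    by (subst is_linear_eq_lin_ext[OF assms(2)]) (rule refl)
  also have "\<dots> = lin_ext (\<lambda>a. lin_ext (\<lambda>b. G (Poly_Mapping.single a 1) (Poly_Mapping.single b 1)) y) x"
    by (simp add: assms(5))
  also have "\<dots> = lin_ext (\<lambda>a. G (Poly_Mapping.single a 1) y) x"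
    by (subst (2) is_linear_eq_lin_ext[OF assms(4)]) (rule refl)
  also have "\<dots> = G x y"
    by (rule is_linear_eq_lin_ext[OF assms(3), symmetric])
  finally show ?thesis .
qed

lemma double_sum_single_eq_lin_ext:
  "(\<Sum>a\<in>Poly_Mapping.keys x. \<Sum>b\<in>Poly_Mapping.keys (Y a).
      Poly_Mapping.single (g a b) (Poly_Mapping.lookup x a * Poly_Mapping.lookup (Y a) b))
   = lin_ext (\<lambda>a. lin_ext (\<lambda>b. Poly_Mapping.single (g a b) 1) (Y a)) x"
  by (simp add: lin_ext_def scal_sum scal_single)

lemma mag_mult_lin_ext:
  "mag_mult x y = lin_ext (\<lambda>a. lin_ext (\<lambda>b. Poly_Mapping.single (bmul a b) 1) y) x"
  unfolding mag_mult_def by (rule double_sum_single_eq_lin_ext)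

lemma tens_lin_ext: "tens x y = lin_ext (\<lambda>a. lin_ext (\<lambda>b. Poly_Mapping.single (a, b) 1) y) x"
  unfolding tens_def by (rule double_sum_single_eq_lin_ext)

lemma mag2_mult_lin_ext:
  "mag2_mult S T = lin_ext (\<lambda>p. lin_ext (\<lambda>q.
      Poly_Mapping.single (bmul (fst p) (fst q), bmul (snd p) (snd q)) 1) T) S"
  unfolding mag2_mult_def by (rule double_sum_single_eq_lin_ext)

lemma bmul_None_right [simp]: "bmul x None = x"
  by (cases x) auto

lemma bmul_eq_None_iff [simp]: "bmul a b = None \<longleftrightarrow> a = None \<and> b = None"
  by (cases a; cases b) auto

lemma mag2_mult_unit_left [simp]: "mag2_mult (Poly_Mapping.single (None, None) 1) S = S"
  by (simp add: mag2_mult_lin_ext)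

lemma mag2_mult_unit_right [simp]: "mag2_mult S (Poly_Mapping.single (None, None) 1) = S"
  by (simp add: mag2_mult_lin_ext)

fun coprod_tree :: "'b ltree \<Rightarrow> ('b, 'k::field) mag2" where
  "coprod_tree (Leaf b) =
     Poly_Mapping.single (Some (Leaf b), None) 1 + Poly_Mapping.single (None, Some (Leaf b)) 1"
| "coprod_tree (Node t s) =
     mag2_mult (coprod_tree t) (Poly_Mapping.single (None, Some s) 1)
     + mag2_mult (Poly_Mapping.single (Some t, None) 1) (coprod_tree s)
     - Poly_Mapping.single (Some t, Some s) 1"

fun coprod_basis :: "'b mbasis \<Rightarrow> ('b, 'k::field) mag2" where
  "coprod_basis None = Poly_Mapping.single (None, None) 1"
| "coprod_basis (Some t) = coprod_tree t"

lemma coprod_basis_bmul: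
  "coprod_basis (bmul a b) = mag2_mult (coprod_basis a) (Poly_Mapping.single (None, b) 1)
     + mag2_mult (Poly_Mapping.single (a, None) 1) (coprod_basis b) - Poly_Mapping.single (a, b) 1"
  by (cases a; cases b) simp_all

lemma mag_coprod_spec_lin_ext_coprod_basis:
  "mag_coprod_spec (lin_ext coprod_basis :: ('b, 'k::field) mag \<Rightarrow> ('b, 'k) mag2)"
  unfolding mag_coprod_spec_def
proof (intro conjI allI impI)
  show "is_linear (lin_ext coprod_basis :: ('b, 'k) mag \<Rightarrow> ('b, 'k) mag2)"
    by (rule is_linear_lin_ext)
  show "lin_ext coprod_basis mag_one = tens mag_one (mag_one :: ('b, 'k) mag)"
    by (simp add: mag_one_def tens_lin_ext)
next
  fix v :: "('b, 'k) mag"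
  assume "inV v"
  then have "lin_ext coprod_basis v
      = lin_ext (\<lambda>a. Poly_Mapping.single (a, None) 1 + Poly_Mapping.single (None, a) 1) v"
    by (intro lin_ext_cong) (auto simp: inV_def)
  then show "lin_ext coprod_basis v = tens v mag_one + tens mag_one v"
    by (simp add: mag_one_def tens_lin_ext)
next
  fix x y :: "('b, 'k) mag"
  show "lin_ext coprod_basis (mag_mult x y) = mag2_mult (lin_ext coprod_basis x) (tens mag_one y)
      + mag2_mult (tens x mag_one) (lin_ext coprod_basis y) - tens x y"
  proof (rule bilinear_eq_on_basis[where F = "\<lambda>x y. lin_ext coprod_basis (mag_mult x y)"
      and G = "\<lambda>x y. mag2_mult (lin_ext coprod_basis x) (tens mag_one y)
        + mag2_mult (tens x mag_one) (lin_ext coprod_basis y) - tens x y"])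
    fix a b
    show "lin_ext coprod_basis (mag_mult (Poly_Mapping.single a 1) (Poly_Mapping.single b 1))
      = mag2_mult (lin_ext coprod_basis (Poly_Mapping.single a 1))
          (tens mag_one (Poly_Mapping.single b 1))
        + mag2_mult (tens (Poly_Mapping.single a 1) mag_one)
          (lin_ext coprod_basis (Poly_Mapping.single b 1))
        - tens (Poly_Mapping.single a 1) (Poly_Mapping.single b (1::'k))"
      by (simp add: mag_mult_lin_ext tens_lin_ext mag_one_def coprod_basis_bmul)
  qed (simp_all add: is_linear_def mag_mult_lin_ext mag2_mult_lin_ext tens_lin_ext mag_one_def
      scal_add_right scal_diff_right algebra_simps)
qed

lemma mag_coprod_spec_unique:
  fixes D :: "('b, 'k::field) mag \<Rightarrow> ('b, 'k) mag2"
  assumes "mag_coprod_spec D"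
  shows "D = lin_ext coprod_basis"
proof -
  have linear: "is_linear D" and unit: "D mag_one = tens mag_one mag_one"
    and leaf: "\<And>v. inV v \<Longrightarrow> D v = tens v mag_one + tens mag_one v"
    and mult: "\<And>x y. D (mag_mult x y)
      = mag2_mult (D x) (tens mag_one y) + mag2_mult (tens x mag_one) (D y) - tens x y"
    using assms unfolding mag_coprod_spec_def by blast+
  have tree: "D (Poly_Mapping.single (Some t) 1) = coprod_tree t" for t
  proof (induction t)
    case (Leaf b)
    have "inV (Poly_Mapping.single (Some (Leaf b)) (1::'k))"
      by (simp add: inV_def)
    then show ?case
      using leaf by (simp add: tens_lin_ext mag_one_def)
  next
    case (Node t s)
    have "Poly_Mapping.single (Some (Node t s)) (1::'k)
        = mag_mult (Poly_Mapping.single (Some t) 1) (Poly_Mapping.single (Some s) 1)"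
      by (simp add: mag_mult_lin_ext)
    then show ?case
      using Node.IH by (simp add: mult tens_lin_ext mag_one_def)
  qed
  have basis: "D (Poly_Mapping.single a 1) = coprod_basis a" for a
    using unit tree by (cases a) (simp_all add: tens_lin_ext mag_one_def)
  show ?thesis
  proof
    fix x
    show "D x = lin_ext coprod_basis x"
      by (subst is_linear_eq_lin_ext[OF linear]) (simp add: basis)
  qed
qed

definition mag3_mult :: "('b, 'k::field) mag3 \<Rightarrow> ('b, 'k) mag3 \<Rightarrow> ('b, 'k) mag3" where
  "mag3_mult S T = lin_ext (\<lambda>p. lin_ext (\<lambda>q. Poly_Mapping.single (bmul (fst p) (fst q),
      bmul (fst (snd p)) (fst (snd q)), bmul (snd (snd p)) (snd (snd q))) 1) T) S"

definition coprod_tens_id :: "('b, 'k::field) mag2 \<Rightarrow> ('b, 'k) mag3" where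
  "coprod_tens_id T = lin_ext (\<lambda>p. lin_ext (\<lambda>q.
      Poly_Mapping.single (fst q, snd q, snd p) 1) (coprod_basis (fst p))) T"

definition id_tens_coprod :: "('b, 'k::field) mag2 \<Rightarrow> ('b, 'k) mag3" where
  "id_tens_coprod T = lin_ext (\<lambda>p. lin_ext (\<lambda>q.
      Poly_Mapping.single (fst p, fst q, snd q) 1) (coprod_basis (snd p))) T"

lemma tens_left_lin_ext_coprod_basis: "tens_left (lin_ext coprod_basis) T = coprod_tens_id T"
  unfolding tens_left_def double_sum_single_eq_lin_ext coprod_tens_id_def by simp

lemma tens_right_lin_ext_coprod_basis: "tens_right (lin_ext coprod_basis) T = id_tens_coprod T"
  unfolding tens_right_def double_sum_single_eq_lin_ext id_tens_coprod_def by simp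

lemma coprod_tens_id_lin_ext: "coprod_tens_id (lin_ext f x) = lin_ext (\<lambda>a. coprod_tens_id (f a)) x"
  by (simp add: coprod_tens_id_def)

lemma id_tens_coprod_lin_ext: "id_tens_coprod (lin_ext f x) = lin_ext (\<lambda>a. id_tens_coprod (f a)) x"
  by (simp add: id_tens_coprod_def)

lemma coprod_tens_id_add [simp]: "coprod_tens_id (x + y) = coprod_tens_id x + coprod_tens_id y"
  by (simp add: coprod_tens_id_def)

lemma coprod_tens_id_diff [simp]: "coprod_tens_id (x - y) = coprod_tens_id x - coprod_tens_id y"
  by (simp add: coprod_tens_id_def)

lemma id_tens_coprod_add [simp]: "id_tens_coprod (x + y) = id_tens_coprod x + id_tens_coprod y"
  by (simp add: id_tens_coprod_def)

lemma id_tens_coprod_diff [simp]: "id_tens_coprod (x - y) = id_tens_coprod x - id_tens_coprod y"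
  by (simp add: id_tens_coprod_def)

lemma coprod_tens_id_single:
  "coprod_tens_id (Poly_Mapping.single (a, b) 1)
   = lin_ext (\<lambda>q. Poly_Mapping.single (fst q, snd q, b) 1) (coprod_basis a)"
  by (simp add: coprod_tens_id_def)

lemma id_tens_coprod_single:
  "id_tens_coprod (Poly_Mapping.single (a, b) 1)
   = lin_ext (\<lambda>q. Poly_Mapping.single (a, fst q, snd q) 1) (coprod_basis b)"
  by (simp add: id_tens_coprod_def)

lemma coprod_tens_id_mult_one_tens:
  "coprod_tens_id (mag2_mult S (Poly_Mapping.single (None, b) 1))
   = mag3_mult (coprod_tens_id S) (Poly_Mapping.single (None, None, b) 1)"
  by (simp add: coprod_tens_id_def mag2_mult_lin_ext mag3_mult_def)

lemma id_tens_coprod_tens_one_mult: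
  "id_tens_coprod (mag2_mult (Poly_Mapping.single (a, None) 1) S)
   = mag3_mult (Poly_Mapping.single (a, None, None) 1) (id_tens_coprod S)"
  by (simp add: id_tens_coprod_def mag2_mult_lin_ext mag3_mult_def)

lemma coprod_tens_id_tens_one_mult:
  "coprod_tens_id (mag2_mult (Poly_Mapping.single (a, None) 1) S)
   = lin_ext (\<lambda>p. lin_ext (\<lambda>q. Poly_Mapping.single (fst q, bmul (snd q) (fst p), snd p) 1)
       (coprod_basis a)) S
     + mag3_mult (Poly_Mapping.single (a, None, None) 1) (coprod_tens_id S)
     - lin_ext (\<lambda>p. Poly_Mapping.single (a, fst p, snd p) 1) S"
  by (simp add: coprod_tens_id_def mag2_mult_lin_ext mag3_mult_def coprod_basis_bmul)

lemma id_tens_coprod_mult_one_tens: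
  "id_tens_coprod (mag2_mult S (Poly_Mapping.single (None, b) 1))
   = mag3_mult (id_tens_coprod S) (Poly_Mapping.single (None, None, b) 1)
     + lin_ext (\<lambda>p. lin_ext (\<lambda>q. Poly_Mapping.single (fst p, bmul (snd p) (fst q), snd q) 1)
         (coprod_basis b)) S
     - lin_ext (\<lambda>p. Poly_Mapping.single (fst p, snd p, b) 1) S"
  by (simp add: id_tens_coprod_def mag2_mult_lin_ext mag3_mult_def coprod_basis_bmul)

lemma coassoc_coprod_tree: "coprod_tens_id (coprod_tree t) = id_tens_coprod (coprod_tree t)"
proof (induction t)
  case (Leaf b)
  then show ?case
    by (simp add: coprod_tens_id_def id_tens_coprod_def add_ac)
next
  case (Node t s)
  let ?cross_left = "lin_ext (\<lambda>p. lin_ext (\<lambda>q.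
      Poly_Mapping.single (fst q, bmul (snd q) (fst p), snd p) 1) (coprod_tree t)) (coprod_tree s)"
  let ?cross_right = "lin_ext (\<lambda>p. lin_ext (\<lambda>q.
      Poly_Mapping.single (fst p, bmul (snd p) (fst q), snd q) 1) (coprod_tree s)) (coprod_tree t)"
  let ?one_one_s = "Poly_Mapping.single (None, None, Some s) 1"
  let ?t_one_one = "Poly_Mapping.single (Some t, None, None) 1"
  let ?t_tens = "lin_ext (\<lambda>p. Poly_Mapping.single (Some t, fst p, snd p) 1) (coprod_tree s)"
  let ?tens_s = "lin_ext (\<lambda>q. Poly_Mapping.single (fst q, snd q, Some s) 1) (coprod_tree t)"
  have left: "coprod_tens_id (coprod_tree (Node t s))
      = mag3_mult (coprod_tens_id (coprod_tree t)) ?one_one_s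
      + (?cross_left + mag3_mult ?t_one_one (coprod_tens_id (coprod_tree s)) - ?t_tens) - ?tens_s"
    by (simp only: coprod_tree.simps coprod_tens_id_add coprod_tens_id_diff coprod_basis.simps
        coprod_tens_id_mult_one_tens coprod_tens_id_tens_one_mult coprod_tens_id_single)
  have right: "id_tens_coprod (coprod_tree (Node t s))
      = (mag3_mult (id_tens_coprod (coprod_tree t)) ?one_one_s + ?cross_right - ?tens_s)
      + mag3_mult ?t_one_one (id_tens_coprod (coprod_tree s)) - ?t_tens"
    by (simp only: coprod_tree.simps id_tens_coprod_add id_tens_coprod_diff coprod_basis.simps
        id_tens_coprod_mult_one_tens id_tens_coprod_tens_one_mult id_tens_coprod_single)
  have cross: "?cross_left = ?cross_right"
    by (rule lin_ext_swap)
  show ?case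
    unfolding left right cross Node.IH by (simp add: algebra_simps)
qed

lemma coassoc_coprod_basis: "coprod_tens_id (coprod_basis a) = id_tens_coprod (coprod_basis a)"
  by (cases a) (simp_all add: coassoc_coprod_tree, simp add: coprod_tens_id_def id_tens_coprod_def)

lemma coassoc_lin_ext_coprod_basis:
  "tens_left (lin_ext coprod_basis) (lin_ext coprod_basis x)
   = tens_right (lin_ext coprod_basis) (lin_ext coprod_basis x)"
  by (simp only: tens_left_lin_ext_coprod_basis tens_right_lin_ext_coprod_basis
      coprod_tens_id_lin_ext id_tens_coprod_lin_ext coassoc_coprod_basis)

lemma counit_single:
  "counit (Poly_Mapping.single a 1 :: ('b, 'k::field) mag) = (if a = None then 1 else 0)"
  by (simp add: counit_def lookup_single when_def)

lemma counit_left_eq_lin_ext: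
  "counit_left T = lin_ext (\<lambda>p. if fst p = None then Poly_Mapping.single (snd p) 1 else 0) T"
  unfolding counit_left_def lin_ext_def
  by (rule sum.cong) (auto simp: counit_single scal_scal)

lemma counit_right_eq_lin_ext:
  "counit_right T = lin_ext (\<lambda>p. if snd p = None then Poly_Mapping.single (fst p) 1 else 0) T"
  unfolding counit_right_def lin_ext_def
  by (rule sum.cong) (auto simp: counit_single scal_scal)

lemma counit_left_add [simp]: "counit_left (S + T) = counit_left S + counit_left T"
  by (simp add: counit_left_eq_lin_ext)

lemma counit_left_diff [simp]: "counit_left (S - T) = counit_left S - counit_left T"
  by (simp add: counit_left_eq_lin_ext)

lemma counit_right_add [simp]: "counit_right (S + T) = counit_right S + counit_right T"
  by (simp add: counit_right_eq_lin_ext)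

lemma counit_right_diff [simp]: "counit_right (S - T) = counit_right S - counit_right T"
  by (simp add: counit_right_eq_lin_ext)

lemma counit_left_single [simp]:
  "counit_left (Poly_Mapping.single (a, b) 1) = (if a = None then Poly_Mapping.single b 1 else 0)"
  by (simp add: counit_left_eq_lin_ext)

lemma counit_right_single [simp]:
  "counit_right (Poly_Mapping.single (a, b) 1) = (if b = None then Poly_Mapping.single a 1 else 0)"
  by (simp add: counit_right_eq_lin_ext)

lemma counit_left_mult_one_tens [simp]:
  "counit_left (mag2_mult S (Poly_Mapping.single (None, b) 1))
   = lin_ext (\<lambda>a. Poly_Mapping.single (bmul a b) 1) (counit_left S)"
  by (simp add: counit_left_eq_lin_ext mag2_mult_lin_ext if_distrib[where f = "lin_ext _"] cong: if_cong)

lemma counit_right_tens_one_mult [simp]: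
  "counit_right (mag2_mult (Poly_Mapping.single (a, None) 1) S)
   = lin_ext (\<lambda>b. Poly_Mapping.single (bmul a b) 1) (counit_right S)"
  by (simp add: counit_right_eq_lin_ext mag2_mult_lin_ext if_distrib[where f = "lin_ext _"] cong: if_cong)

lemma counit_left_tens_mult [simp]:
  "counit_left (mag2_mult (Poly_Mapping.single (Some t, b) 1) S) = 0"
  by (simp add: counit_left_eq_lin_ext mag2_mult_lin_ext)

lemma counit_right_tens_mult [simp]:
  "counit_right (mag2_mult S (Poly_Mapping.single (a, Some t) 1)) = 0"
  by (simp add: counit_right_eq_lin_ext mag2_mult_lin_ext)

lemma counit_left_coprod_tree:
  "counit_left (coprod_tree t :: ('b, 'k::field) mag2) = Poly_Mapping.single (Some t) 1"
  by (induction t) simp_all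

lemma counit_right_coprod_tree:
  "counit_right (coprod_tree t :: ('b, 'k::field) mag2) = Poly_Mapping.single (Some t) 1"
  by (induction t) simp_all

lemma counit_left_lin_ext: "counit_left (lin_ext f x) = lin_ext (\<lambda>a. counit_left (f a)) x"
  by (simp add: counit_left_eq_lin_ext)

lemma counit_right_lin_ext: "counit_right (lin_ext f x) = lin_ext (\<lambda>a. counit_right (f a)) x"
  by (simp add: counit_right_eq_lin_ext)

lemma counit_left_coprod_basis:
  "counit_left (coprod_basis a :: ('b, 'k::field) mag2) = Poly_Mapping.single a 1"
  by (cases a) (simp_all add: counit_left_coprod_tree)

lemma counit_left_lin_ext_coprod_basis: "counit_left (lin_ext coprod_basis x) = x"
  by (simp add: counit_left_lin_ext counit_left_coprod_basis)

lemma counit_right_coprod_basis: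
  "counit_right (coprod_basis a :: ('b, 'k::field) mag2) = Poly_Mapping.single a 1"
  by (cases a) (simp_all add: counit_right_coprod_tree)

lemma counit_right_lin_ext_coprod_basis: "counit_right (lin_ext coprod_basis x) = x"
  by (simp add: counit_right_lin_ext counit_right_coprod_basis)

lemma mag_mult_one_left [simp]: "mag_mult mag_one x = x"
  by (simp add: mag_mult_lin_ext mag_one_def)

lemma mag_mult_one_right [simp]: "mag_mult x mag_one = x"
  by (simp add: mag_mult_lin_ext mag_one_def)

lemma counit_add: "counit (x + y) = counit x + counit y"
  by (simp add: counit_def lookup_add)

lemma counit_scal: "counit (scal c x) = c * counit x"
  by (simp add: counit_def)

theorem proposition1p3:
  shows "(\<exists>!D :: ('b, 'k::field) mag \<Rightarrow> ('b, 'k) mag2. mag_coprod_spec D) \<and>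
    (\<forall>D :: ('b, 'k) mag \<Rightarrow> ('b, 'k) mag2. mag_coprod_spec D \<longrightarrow>
        (\<forall>x. tens_left D (D x) = tens_right D (D x)) \<and> asc_mag_bialgebra D)"
proof (intro conjI allI impI)
  show "\<exists>!D :: ('b, 'k) mag \<Rightarrow> ('b, 'k) mag2. mag_coprod_spec D"
    using mag_coprod_spec_lin_ext_coprod_basis mag_coprod_spec_unique by blast
next
  fix D :: "('b, 'k) mag \<Rightarrow> ('b, 'k) mag2"
  assume spec: "mag_coprod_spec D"
  then have D: "D = lin_ext coprod_basis"
    by (rule mag_coprod_spec_unique)
  show coassoc: "tens_left D (D x) = tens_right D (D x)" for x
    unfolding D by (rule coassoc_lin_ext_coprod_basis)
  have counit: "counit_left (D x) = x" "counit_right (D x) = x" for x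
    unfolding D by (rule counit_left_lin_ext_coprod_basis counit_right_lin_ext_coprod_basis)+
  show "asc_mag_bialgebra D"
    using spec coassoc counit mag_mult_one_left mag_mult_one_right counit_add counit_scal
    unfolding asc_mag_bialgebra_def mag_coprod_spec_def by blast
qed

end
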